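(* Let $G$ be a finite group acting transitively on a finite set $X$, fix $x_0\in X$, let $H=G_{x_0}$, and let $K\subset G$ be a regular subgroup. Let $H$ act on $K$ by $h\cdot k=k'$ iff $hk\cdot x_0=k'\cdot x_0$, and let $L^2(K)^H=\{\varphi\colon K\to\mathbb{C}:\varphi(h\cdot k)=\varphi(k)\ \forall h\in H,k\in K\}$. Then $L^2(K)^H$ is a $*$-subalgebra of $L^2(K)$ (with convolution $(\varphi_1*\varphi_2)(k)=\sum_{k'\in K}\varphi_1(k')\varphi_2(k'^{-1}k)$ and involution $\varphi^*(k)=\overline{\varphi(k^{-1})}$), and the map $A\mapsto \tilde\varphi_A$, $\tilde\varphi_A(k)=A_{x_0,k\cdot x_0}$ ($k\in K$), is a $*$-algebra isomorphism from $\mathscr{A}$ onto $L^2(K)^H$.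
   Context: $\mathscr{A}$ denotes the $*$-algebra (under matrix multiplication and conjugate transpose) of complex $X\times X$ matrices $M$ with $M_{g\cdot x,g\cdot y}=M_{x,y}$ for all $g\in G$, $x,y\in X$. A subgroup $K\subset G$ is regular if it acts transitively on $X$ with trivial point stabilizers. *)

theory Defs
  imports "HOL-Algebra.Group_Action" "HOL-Analysis.Analysis"
begin

text \<open>Matrices indexed by the finite set X are functions X \<Rightarrow> X \<Rightarrow> complex,
  normalised to be 0 outside X \<times> X.\<close>

definition mat_on :: "'x set \<Rightarrow> ('x \<Rightarrow> 'x \<Rightarrow> complex) set" where
  "mat_on X = {M. \<forall>x y. (x \<notin> X \<or> y \<notin> X) \<longrightarrow> M x y = 0}"

definition mat_mult :: "'x set \<Rightarrow> ('x \<Rightarrow> 'x \<Rightarrow> complex) \<Rightarrow> ('x \<Rightarrow> 'x \<Rightarrow> complex) \<Rightarrow> ('x \<Rightarrow> 'x \<Rightarrow> complex)" where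
  "mat_mult X A B = (\<lambda>x y. if x \<in> X \<and> y \<in> X then (\<Sum>z\<in>X. A x z * B z y) else 0)"

definition mat_star :: "'x set \<Rightarrow> ('x \<Rightarrow> 'x \<Rightarrow> complex) \<Rightarrow> ('x \<Rightarrow> 'x \<Rightarrow> complex)" where
  "mat_star X A = (\<lambda>x y. if x \<in> X \<and> y \<in> X then cnj (A y x) else 0)"

definition inv_matrices :: "('g, 'm) monoid_scheme \<Rightarrow> 'x set \<Rightarrow> ('g \<Rightarrow> 'x \<Rightarrow> 'x) \<Rightarrow> ('x \<Rightarrow> 'x \<Rightarrow> complex) set" where
  "inv_matrices G X \<phi> = {M \<in> mat_on X. \<forall>g\<in>carrier G. \<forall>x\<in>X. \<forall>y\<in>X. M (\<phi> g x) (\<phi> g y) = M x y}"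

definition regular_subgroup :: "('g, 'm) monoid_scheme \<Rightarrow> 'x set \<Rightarrow> ('g \<Rightarrow> 'x \<Rightarrow> 'x) \<Rightarrow> 'g set \<Rightarrow> bool" where
  "regular_subgroup G X \<phi> K \<longleftrightarrow> subgroup K G
     \<and> (\<forall>x\<in>X. \<forall>y\<in>X. \<exists>k\<in>K. \<phi> k x = y)
     \<and> (\<forall>x\<in>X. \<forall>k\<in>K. \<phi> k x = x \<longrightarrow> k = \<one>\<^bsub>G\<^esub>)"

definition fun_on :: "'g set \<Rightarrow> ('g \<Rightarrow> complex) set" where
  "fun_on K = {f. \<forall>k. k \<notin> K \<longrightarrow> f k = 0}"

definition conv :: "('g, 'm) monoid_scheme \<Rightarrow> 'g set \<Rightarrow> ('g \<Rightarrow> complex) \<Rightarrow> ('g \<Rightarrow> complex) \<Rightarrow> ('g \<Rightarrow> complex)" where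
  "conv G K f1 f2 = (\<lambda>k. if k \<in> K then (\<Sum>k'\<in>K. f1 k' * f2 (inv\<^bsub>G\<^esub> k' \<otimes>\<^bsub>G\<^esub> k)) else 0)"

definition fstar :: "('g, 'm) monoid_scheme \<Rightarrow> 'g set \<Rightarrow> ('g \<Rightarrow> complex) \<Rightarrow> ('g \<Rightarrow> complex)" where
  "fstar G K f = (\<lambda>k. if k \<in> K then cnj (f (inv\<^bsub>G\<^esub> k)) else 0)"

definition hact :: "('g, 'm) monoid_scheme \<Rightarrow> ('g \<Rightarrow> 'x \<Rightarrow> 'x) \<Rightarrow> 'g set \<Rightarrow> 'x \<Rightarrow> 'g \<Rightarrow> 'g \<Rightarrow> 'g" where
  "hact G \<phi> K x0 h k = (THE k'. k' \<in> K \<and> \<phi> (h \<otimes>\<^bsub>G\<^esub> k) x0 = \<phi> k' x0)"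

definition L2_inv :: "('g, 'm) monoid_scheme \<Rightarrow> ('g \<Rightarrow> 'x \<Rightarrow> 'x) \<Rightarrow> 'g set \<Rightarrow> 'x \<Rightarrow> 'g set \<Rightarrow> ('g \<Rightarrow> complex) set" where
  "L2_inv G \<phi> K x0 H = {f \<in> fun_on K. \<forall>h\<in>H. \<forall>k\<in>K. f (hact G \<phi> K x0 h k) = f k}"

definition phi_tilde :: "('g \<Rightarrow> 'x \<Rightarrow> 'x) \<Rightarrow> 'g set \<Rightarrow> 'x \<Rightarrow> ('x \<Rightarrow> 'x \<Rightarrow> complex) \<Rightarrow> ('g \<Rightarrow> complex)" where
  "phi_tilde \<phi> K x0 A = (\<lambda>k. if k \<in> K then A x0 (\<phi> k x0) else 0)"

end

theory Submission
  imports Defs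
begin

text \<open>Since K acts regularly, k \<mapsto> k \<cdot> x0 identifies K with X. A G-invariant matrix A
  is determined by its row at x0, because A x y = A x0 (k\<inverse> \<cdot> y) for the k \<in> K with
  k \<cdot> x0 = x, and conversely a function on K extends to an invariant matrix in this way exactly
  when it is invariant under the stabiliser H of x0. Under this identification matrix products
  become convolutions and adjoints become the involution of L^2(K); hence L^2(K)^H, being
  the image of the *-algebra \<A>, is itself a *-subalgebra.\<close>

sublocale group_action \<subseteq> group G
  using group_hom group_hom.axioms(1) by blast

context group_action
begin

lemma act_one: "x \<in> E \<Longrightarrow> \<phi> \<one> x = x"
  by (metis id_eq_one restrict_apply')

lemma act_inv_act: "g \<in> carrier G \<Longrightarrow> x \<in> E \<Longrightarrow> \<phi> g (\<phi> (inv g) x) = x"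
  using orbit_sym_aux[of "inv g" x "\<phi> (inv g) x"] by simp

lemma inv_matrices_act:
  "A \<in> inv_matrices G E \<phi> \<Longrightarrow> g \<in> carrier G \<Longrightarrow> x \<in> E \<Longrightarrow> y \<in> E \<Longrightarrow> A (\<phi> g x) (\<phi> g y) = A x y"
  by (simp add: inv_matrices_def)

lemma mat_mult_in_inv_matrices:
  assumes A: "A \<in> inv_matrices G E \<phi>" and B: "B \<in> inv_matrices G E \<phi>"
  shows "mat_mult E A B \<in> inv_matrices G E \<phi>"
  unfolding inv_matrices_def
proof (intro CollectI conjI ballI)
  show "mat_mult E A B \<in> mat_on E" by (simp add: mat_on_def mat_mult_def)
next
  fix g x y assume g: "g \<in> carrier G" and x: "x \<in> E" and y: "y \<in> E"
  have "mat_mult E A B (\<phi> g x) (\<phi> g y) = (\<Sum>z\<in>E. A (\<phi> g x) z * B z (\<phi> g y))"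
    using g x y surj_prop by (auto simp add: mat_mult_def)
  also have "\<dots> = (\<Sum>z\<in>E. A (\<phi> g x) (\<phi> g z) * B (\<phi> g z) (\<phi> g y))"
    using bij_prop0[OF g] by (intro sum.reindex_bij_betw[symmetric]) (simp add: Bij_def)
  also have "\<dots> = (\<Sum>z\<in>E. A x z * B z y)"
    using inv_matrices_act[OF A g x] inv_matrices_act[OF B g _ y] by (intro sum.cong) simp_all
  also have "\<dots> = mat_mult E A B x y" using x y by (simp add: mat_mult_def)
  finally show "mat_mult E A B (\<phi> g x) (\<phi> g y) = mat_mult E A B x y" .
qed

lemma mat_star_in_inv_matrices:
  assumes A: "A \<in> inv_matrices G E \<phi>"
  shows "mat_star E A \<in> inv_matrices G E \<phi>"
  using A surj_prop by (auto simp add: inv_matrices_def mat_on_def mat_star_def)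

end

lemma L2_inv_add_closed:
  "f1 \<in> L2_inv G \<phi> K x0 H \<Longrightarrow> f2 \<in> L2_inv G \<phi> K x0 H \<Longrightarrow> (\<lambda>k. f1 k + f2 k) \<in> L2_inv G \<phi> K x0 H"
  by (simp add: L2_inv_def fun_on_def)

lemma L2_inv_scale_closed: "f \<in> L2_inv G \<phi> K x0 H \<Longrightarrow> (\<lambda>k. c * f k) \<in> L2_inv G \<phi> K x0 H"
  by (simp add: L2_inv_def fun_on_def)

locale regular_subgroup_action = group_action G X \<phi>
  for G (structure) and X :: "'x set" and \<phi> :: "'g \<Rightarrow> 'x \<Rightarrow> 'x" +
  fixes x0 :: 'x and K :: "'g set"
  assumes base_point: "x0 \<in> X" and regular: "regular_subgroup G X \<phi> K"
begin

abbreviation "H \<equiv> stabilizer G \<phi> x0"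

lemma subgroup_K: "subgroup K G"
  using regular by (simp add: regular_subgroup_def)

lemma K_carrier: "k \<in> K \<Longrightarrow> k \<in> carrier G"
  using subgroup.mem_carrier[OF subgroup_K] .

lemma orbit_map_bij: "bij_betw (\<lambda>k. \<phi> k x0) K X"
proof (rule bij_betw_imageI)
  show "inj_on (\<lambda>k. \<phi> k x0) K"
  proof (rule inj_onI)
    fix k k' assume k: "k \<in> K" and k': "k' \<in> K" and eq: "\<phi> k x0 = \<phi> k' x0"
    have "inv k' \<otimes> k \<in> K"
      using k k' subgroup_K by (simp add: subgroup.m_closed subgroup.m_inv_closed)
    moreover have "\<phi> (inv k' \<otimes> k) x0 = x0"
      using k k' eq base_point K_carrier by (simp add: composition_rule orbit_sym_aux)
    ultimately have "inv k' \<otimes> k = \<one>"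
      using regular base_point by (simp add: regular_subgroup_def)
    then have "k' \<otimes> (inv k' \<otimes> k) = k'" using k' K_carrier by simp
    then show "k = k'" using k k' K_carrier by (simp add: m_assoc[symmetric])
  qed
  show "(\<lambda>k. \<phi> k x0) ` K = X"
  proof
    show "(\<lambda>k. \<phi> k x0) ` K \<subseteq> X" using base_point K_carrier surj_prop by blast
    show "X \<subseteq> (\<lambda>k. \<phi> k x0) ` K"
      using regular base_point by (force simp add: regular_subgroup_def)
  qed
qed

definition transporter :: "'x \<Rightarrow> 'g" where
  "transporter = inv_into K (\<lambda>k. \<phi> k x0)"

lemma transporter_in: "z \<in> X \<Longrightarrow> transporter z \<in> K"
  using bij_betw_inv_into[OF orbit_map_bij] bij_betwE by (fastforce simp add: transporter_def)

lemma transporter_apply: "z \<in> X \<Longrightarrow> \<phi> (transporter z) x0 = z"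
  using bij_betw_inv_into_right[OF orbit_map_bij] by (simp add: transporter_def)

lemma transporter_orbit: "k \<in> K \<Longrightarrow> transporter (\<phi> k x0) = k"
  using bij_betw_inv_into_left[OF orbit_map_bij] by (simp add: transporter_def)

lemma orbit_in: "k \<in> K \<Longrightarrow> \<phi> k x0 \<in> X"
  using bij_betwE[OF orbit_map_bij] by blast

lemma hact_eq_transporter:
  assumes h: "h \<in> carrier G" and k: "k \<in> K"
  shows "hact G \<phi> K x0 h k = transporter (\<phi> h (\<phi> k x0))"
proof -
  have z: "\<phi> h (\<phi> k x0) \<in> X" using h orbit_in[OF k] surj_prop by blast
  have hk: "\<phi> (h \<otimes> k) x0 = \<phi> h (\<phi> k x0)"
    using h k K_carrier base_point by (simp add: composition_rule)
  show ?thesis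
    unfolding hact_def hk
    using transporter_in[OF z] transporter_apply[OF z] transporter_orbit by (intro the_equality) auto
qed

lemma inv_matrix_eq_base_row:
  assumes A: "A \<in> inv_matrices G X \<phi>" and x: "x \<in> X" and y: "y \<in> X"
  shows "A x y = A x0 (\<phi> (inv (transporter x)) y)"
proof -
  let ?k = "transporter x"
  have k: "?k \<in> carrier G" using K_carrier transporter_in[OF x] .
  have "\<phi> (inv ?k) y \<in> X" using k y surj_prop by blast
  then have "A x0 (\<phi> (inv ?k) y) = A (\<phi> ?k x0) (\<phi> ?k (\<phi> (inv ?k) y))"
    using inv_matrices_act[OF A k base_point] by simp
  also have "\<dots> = A x y" using transporter_apply[OF x] act_inv_act[OF k y] by simp
  finally show ?thesis by simp
qed

text \<open>The inverse of \<open>phi_tilde\<close>: a function on K, read as the row at x0, spread out by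
  G-invariance.\<close>
definition matrix_of :: "('g \<Rightarrow> complex) \<Rightarrow> 'x \<Rightarrow> 'x \<Rightarrow> complex" where
  "matrix_of f = (\<lambda>x y. if x \<in> X \<and> y \<in> X then f (transporter (\<phi> (inv (transporter x)) y)) else 0)"

lemma phi_tilde_in_L2_inv:
  assumes A: "A \<in> inv_matrices G X \<phi>"
  shows "phi_tilde \<phi> K x0 A \<in> L2_inv G \<phi> K x0 H"
  unfolding L2_inv_def fun_on_def
proof (intro CollectI conjI allI impI ballI)
  fix k :: 'g assume "k \<notin> K" then show "phi_tilde \<phi> K x0 A k = 0" by (simp add: phi_tilde_def)
next
  fix h k assume h: "h \<in> H" and k: "k \<in> K"
  have hG: "h \<in> carrier G" and hx0: "\<phi> h x0 = x0" using h by (auto simp add: stabilizer_def)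
  have z: "\<phi> h (\<phi> k x0) \<in> X" using hG orbit_in[OF k] surj_prop by blast
  have "phi_tilde \<phi> K x0 A (hact G \<phi> K x0 h k) = A (\<phi> h x0) (\<phi> h (\<phi> k x0))"
    using hact_eq_transporter[OF hG k] transporter_in[OF z] transporter_apply[OF z] hx0
    by (simp add: phi_tilde_def)
  also have "\<dots> = A x0 (\<phi> k x0)" using inv_matrices_act[OF A hG base_point orbit_in[OF k]] .
  finally show "phi_tilde \<phi> K x0 A (hact G \<phi> K x0 h k) = phi_tilde \<phi> K x0 A k"
    using k by (simp add: phi_tilde_def)
qed

lemma matrix_of_in_inv_matrices:
  assumes f: "f \<in> L2_inv G \<phi> K x0 H"
  shows "matrix_of f \<in> inv_matrices G X \<phi>"
  unfolding inv_matrices_def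
proof (intro CollectI conjI ballI)
  show "matrix_of f \<in> mat_on X" by (simp add: mat_on_def matrix_of_def)
next
  fix g x y assume g: "g \<in> carrier G" and x: "x \<in> X" and y: "y \<in> X"
  have gx: "\<phi> g x \<in> X" and gy: "\<phi> g y \<in> X" using g x y surj_prop by auto
  define a where "a = transporter x"
  define b where "b = transporter (\<phi> g x)"
  define c where "c = transporter (\<phi> (inv a) y)"
  have a: "a \<in> carrier G" "\<phi> a x0 = x"
    using transporter_in[OF x] transporter_apply[OF x] K_carrier by (auto simp add: a_def)
  have b: "b \<in> carrier G" "\<phi> b x0 = \<phi> g x"
    using transporter_in[OF gx] transporter_apply[OF gx] K_carrier by (auto simp add: b_def)
  have ay: "\<phi> (inv a) y \<in> X" using a y surj_prop by auto
  have c: "c \<in> K" "\<phi> c x0 = \<phi> (inv a) y"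
    using transporter_in[OF ay] transporter_apply[OF ay] by (auto simp add: c_def)
  \<comment> \<open>g moves the row at x to the row at g x; conjugating back by the transporters yields an
    element of H, under which f is invariant.\<close>
  define h where "h = inv b \<otimes> g \<otimes> a"
  have h_act: "\<phi> h w = \<phi> (inv b) (\<phi> g (\<phi> a w))" if w: "w \<in> X" for w
  proof -
    have "\<phi> a w \<in> X" using a w surj_prop by blast
    then show ?thesis using a b g w by (simp add: h_def composition_rule)
  qed
  have "\<phi> h x0 = x0" using h_act[OF base_point] a b base_point orbit_sym_aux by simp
  then have hH: "h \<in> H" using a b g by (simp add: h_def stabilizer_def)
  have "hact G \<phi> K x0 h c = transporter (\<phi> (inv b) (\<phi> g y))"
    using hact_eq_transporter[of h c] h_act[OF ay] a b g c act_inv_act[OF _ y] by (simp add: h_def)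
  moreover have "f (hact G \<phi> K x0 h c) = f c"
    using f hH c by (simp add: L2_inv_def)
  ultimately show "matrix_of f (\<phi> g x) (\<phi> g y) = matrix_of f x y"
    using x y gx gy by (simp add: matrix_of_def a_def b_def c_def)
qed

lemma phi_tilde_matrix_of:
  assumes f: "f \<in> L2_inv G \<phi> K x0 H"
  shows "phi_tilde \<phi> K x0 (matrix_of f) = f"
proof
  fix k show "phi_tilde \<phi> K x0 (matrix_of f) k = f k"
  proof (cases "k \<in> K")
    case True
    have "transporter x0 = \<one>"
      using transporter_orbit[OF subgroup.one_closed[OF subgroup_K]] act_one[OF base_point] by simp
    then show ?thesis
      using True orbit_in[OF True] base_point act_one transporter_orbit
      by (simp add: phi_tilde_def matrix_of_def)
  next
    case False then show ?thesis using f by (simp add: phi_tilde_def L2_inv_def fun_on_def)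
  qed
qed

lemma matrix_of_phi_tilde:
  assumes A: "A \<in> inv_matrices G X \<phi>"
  shows "matrix_of (phi_tilde \<phi> K x0 A) = A"
proof (intro ext)
  fix x y
  show "matrix_of (phi_tilde \<phi> K x0 A) x y = A x y"
  proof (cases "x \<in> X \<and> y \<in> X")
    case True
    then have "\<phi> (inv (transporter x)) y \<in> X"
      using transporter_in K_carrier surj_prop by blast
    then show ?thesis
      using True inv_matrix_eq_base_row[OF A] transporter_in transporter_apply
      by (simp add: matrix_of_def phi_tilde_def)
  next
    case False then show ?thesis using A by (auto simp add: matrix_of_def inv_matrices_def mat_on_def)
  qed
qed

lemma phi_tilde_bij: "bij_betw (phi_tilde \<phi> K x0) (inv_matrices G X \<phi>) (L2_inv G \<phi> K x0 H)"
proof (rule bij_betw_byWitness[where f' = matrix_of])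
  show "\<forall>A\<in>inv_matrices G X \<phi>. matrix_of (phi_tilde \<phi> K x0 A) = A"
    using matrix_of_phi_tilde by blast
  show "\<forall>f\<in>L2_inv G \<phi> K x0 H. phi_tilde \<phi> K x0 (matrix_of f) = f"
    using phi_tilde_matrix_of by blast
  show "phi_tilde \<phi> K x0 ` inv_matrices G X \<phi> \<subseteq> L2_inv G \<phi> K x0 H"
    using phi_tilde_in_L2_inv by blast
  show "matrix_of ` L2_inv G \<phi> K x0 H \<subseteq> inv_matrices G X \<phi>"
    using matrix_of_in_inv_matrices by blast
qed

lemma phi_tilde_mat_mult:
  assumes A: "A \<in> inv_matrices G X \<phi>" and B: "B \<in> inv_matrices G X \<phi>"
  shows "phi_tilde \<phi> K x0 (mat_mult X A B) = conv G K (phi_tilde \<phi> K x0 A) (phi_tilde \<phi> K x0 B)"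
proof
  fix k
  show "phi_tilde \<phi> K x0 (mat_mult X A B) k
      = conv G K (phi_tilde \<phi> K x0 A) (phi_tilde \<phi> K x0 B) k"
  proof (cases "k \<in> K")
    case True
    have "phi_tilde \<phi> K x0 (mat_mult X A B) k = (\<Sum>z\<in>X. A x0 z * B z (\<phi> k x0))"
      using True orbit_in base_point by (simp add: phi_tilde_def mat_mult_def)
    also have "\<dots> = (\<Sum>k'\<in>K. A x0 (\<phi> k' x0) * B (\<phi> k' x0) (\<phi> k x0))"
      by (rule sum.reindex_bij_betw[OF orbit_map_bij, symmetric])
    also have "\<dots> = (\<Sum>k'\<in>K. phi_tilde \<phi> K x0 A k' * phi_tilde \<phi> K x0 B (inv k' \<otimes> k))"
    proof (rule sum.cong[OF refl])
      fix k' assume k': "k' \<in> K"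
      have k'G: "k' \<in> carrier G" and kG: "k \<in> carrier G" using K_carrier k' True by auto
      have q: "inv k' \<otimes> k \<in> K"
        using k' True subgroup_K by (simp add: subgroup.m_closed subgroup.m_inv_closed)
      have "\<phi> k' (\<phi> (inv k' \<otimes> k) x0) = \<phi> k x0"
        using k'G kG base_point by (simp add: composition_rule[symmetric] m_assoc[symmetric])
      then have "B x0 (\<phi> (inv k' \<otimes> k) x0) = B (\<phi> k' x0) (\<phi> k x0)"
        using inv_matrices_act[OF B k'G base_point orbit_in[OF q]] by simp
      then show "A x0 (\<phi> k' x0) * B (\<phi> k' x0) (\<phi> k x0)
          = phi_tilde \<phi> K x0 A k' * phi_tilde \<phi> K x0 B (inv k' \<otimes> k)"
        using k' q by (simp add: phi_tilde_def)
    qed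
    finally show ?thesis using True by (simp add: conv_def)
  next
    case False then show ?thesis by (simp add: phi_tilde_def conv_def)
  qed
qed

lemma phi_tilde_mat_star:
  assumes A: "A \<in> inv_matrices G X \<phi>"
  shows "phi_tilde \<phi> K x0 (mat_star X A) = fstar G K (phi_tilde \<phi> K x0 A)"
proof
  fix k show "phi_tilde \<phi> K x0 (mat_star X A) k = fstar G K (phi_tilde \<phi> K x0 A) k"
  proof (cases "k \<in> K")
    case True
    have kG: "k \<in> carrier G" using K_carrier True .
    have ik: "inv k \<in> K" using True subgroup_K by (simp add: subgroup.m_inv_closed)
    have "A x0 (\<phi> (inv k) x0) = A (\<phi> k x0) (\<phi> k (\<phi> (inv k) x0))"
      using inv_matrices_act[OF A kG base_point orbit_in[OF ik]] by simp
    then have "A x0 (\<phi> (inv k) x0) = A (\<phi> k x0) x0" using act_inv_act[OF kG base_point] by simp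
    then show ?thesis using True ik orbit_in[OF True] base_point
      by (simp add: phi_tilde_def mat_star_def fstar_def)
  next
    case False then show ?thesis by (simp add: phi_tilde_def fstar_def)
  qed
qed

lemma L2_inv_eq_image: "L2_inv G \<phi> K x0 H = phi_tilde \<phi> K x0 ` inv_matrices G X \<phi>"
  using phi_tilde_bij by (simp add: bij_betw_def)

lemma conv_in_L2_inv:
  "f1 \<in> L2_inv G \<phi> K x0 H \<Longrightarrow> f2 \<in> L2_inv G \<phi> K x0 H \<Longrightarrow> conv G K f1 f2 \<in> L2_inv G \<phi> K x0 H"
  unfolding L2_inv_eq_image
  by (auto simp add: phi_tilde_mat_mult[symmetric] mat_mult_in_inv_matrices)

lemma fstar_in_L2_inv: "f \<in> L2_inv G \<phi> K x0 H \<Longrightarrow> fstar G K f \<in> L2_inv G \<phi> K x0 H"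
  unfolding L2_inv_eq_image
  by (auto simp add: phi_tilde_mat_star[symmetric] mat_star_in_inv_matrices)

end

theorem theorem3p11:
  fixes G (structure) and X :: "'x set" and \<phi> :: "'g \<Rightarrow> 'x \<Rightarrow> 'x"
    and x0 :: 'x and H K :: "'g set"
  assumes "transitive_action G X \<phi>"
    and "finite (carrier G)" and "finite X"
    and "x0 \<in> X"
    and "H = stabilizer G \<phi> x0"
    and "regular_subgroup G X \<phi> K"
  shows "(\<forall>f1\<in>L2_inv G \<phi> K x0 H. \<forall>f2\<in>L2_inv G \<phi> K x0 H.
            (\<lambda>k. f1 k + f2 k) \<in> L2_inv G \<phi> K x0 H
          \<and> conv G K f1 f2 \<in> L2_inv G \<phi> K x0 H)
       \<and> (\<forall>f\<in>L2_inv G \<phi> K x0 H. \<forall>c::complex. (\<lambda>k. c * f k) \<in> L2_inv G \<phi> K x0 H)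
       \<and> (\<forall>f\<in>L2_inv G \<phi> K x0 H. fstar G K f \<in> L2_inv G \<phi> K x0 H)
       \<and> bij_betw (phi_tilde \<phi> K x0) (inv_matrices G X \<phi>) (L2_inv G \<phi> K x0 H)
       \<and> (\<forall>A\<in>inv_matrices G X \<phi>. \<forall>B\<in>inv_matrices G X \<phi>. \<forall>c::complex.
            phi_tilde \<phi> K x0 (\<lambda>x y. A x y + B x y)
              = (\<lambda>k. phi_tilde \<phi> K x0 A k + phi_tilde \<phi> K x0 B k)
          \<and> phi_tilde \<phi> K x0 (\<lambda>x y. c * A x y) = (\<lambda>k. c * phi_tilde \<phi> K x0 A k)
          \<and> phi_tilde \<phi> K x0 (mat_mult X A B)
              = conv G K (phi_tilde \<phi> K x0 A) (phi_tilde \<phi> K x0 B)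
          \<and> phi_tilde \<phi> K x0 (mat_star X A) = fstar G K (phi_tilde \<phi> K x0 A))"
proof -
  interpret regular_subgroup_action G X \<phi> x0 K
    using assms by (simp add: regular_subgroup_action_def regular_subgroup_action_axioms_def
        transitive_action_def)
  show ?thesis
    unfolding assms(5)
    using L2_inv_add_closed L2_inv_scale_closed conv_in_L2_inv fstar_in_L2_inv phi_tilde_bij
      phi_tilde_mat_mult phi_tilde_mat_star
    by (auto simp add: phi_tilde_def fun_eq_iff)
qed

end
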